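(* The function $h$ is well defined (distinct sequences $(\alpha_n)$ with $\alpha_n\in\Theta$ give distinct points of $D(h)$, each point of $D(h)$ having a unique nega-$q$-ary representation), $h$ is a bijection from $D(h)$ onto $E(h)=\{\Delta^{-q}_{\alpha_1\alpha_2\ldots}:\alpha_n\in\Theta\}$, and $h$ is continuous at every point of $D(h)$.
   Context: Let $q>3$ be an integer, fix $u\in\{0,1,\ldots,q-1\}$, and put $\Theta=\{1,2,\ldots,q-1\}\setminus\{u\}$. The nega-$q$-ary representation is $\Delta^{-q}_{\beta_1\beta_2\ldots}=\sum_{k\ge1}\frac{\beta_k}{(-q)^k}$, $\beta_k\in\{0,\ldots,q-1\}$. For a sequence $(\alpha_n)_{n\ge1}$ with $\alpha_n\in\Theta$, let $x((\alpha_n))$ be the number whose nega-$q$-ary digit string is the concatenation of the blocks $\underbrace{u\ldots u}_{\alpha_n-1}\alpha_n$ ($\alpha_n-1$ copies of $u$ followed by the digit $\alpha_n$), $n=1,2,\ldots$; equivalently $x=-\frac{u}{q+1}+\sum_{n\ge1}\frac{\alpha_n-u}{(-q)^{\alpha_1+\cdots+\alpha_n}}$. Let $D(h)$ be the set of all such $x$, and define $h:D(h)\to\mathbb R$ by $h(x)=\Delta^{-q}_{\alpha_1\alpha_2\ldots}=\sum_{n\ge1}\frac{\alpha_n}{(-q)^n}$. *)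

theory Defs
  imports "HOL-Analysis.Analysis"
begin

text \<open>Digit sequences are 0-indexed: beta 0 is the first digit beta_1.
  Nega-q-ary value of a digit sequence.\<close>
definition negaq :: "nat \<Rightarrow> (nat \<Rightarrow> nat) \<Rightarrow> real" where
  "negaq q \<beta> = (\<Sum>k. real (\<beta> k) / (- real q) ^ (Suc k))"

definition Theta :: "nat \<Rightarrow> nat \<Rightarrow> nat set" where
  "Theta q u = {1..q-1} - {u}"

definition Seqs :: "nat \<Rightarrow> nat \<Rightarrow> (nat \<Rightarrow> nat) set" where
  "Seqs q u = {\<alpha>. \<forall>n. \<alpha> n \<in> Theta q u}"

definition psum :: "(nat \<Rightarrow> nat) \<Rightarrow> nat \<Rightarrow> nat" where
  "psum \<alpha> n = (\<Sum>i<n. \<alpha> i)"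

text \<open>Concatenation of the blocks u...u alpha_n (alpha_n - 1 copies of u, then alpha_n):
  the digit at (1-based) position p is alpha_n if p = alpha_1+...+alpha_n, and u otherwise.
  Here index k (0-based) corresponds to position k+1.\<close>
definition blockdigits :: "nat \<Rightarrow> (nat \<Rightarrow> nat) \<Rightarrow> nat \<Rightarrow> nat" where
  "blockdigits u \<alpha> k =
     (if \<exists>n. psum \<alpha> (Suc n) = Suc k then \<alpha> (LEAST n. psum \<alpha> (Suc n) = Suc k) else u)"

definition xval :: "nat \<Rightarrow> nat \<Rightarrow> (nat \<Rightarrow> nat) \<Rightarrow> real" where
  "xval q u \<alpha> = negaq q (blockdigits u \<alpha>)"

definition Dh :: "nat \<Rightarrow> nat \<Rightarrow> real set" where
  "Dh q u = xval q u ` Seqs q u"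

definition Eh :: "nat \<Rightarrow> nat \<Rightarrow> real set" where
  "Eh q u = negaq q ` Seqs q u"

definition h :: "nat \<Rightarrow> nat \<Rightarrow> real \<Rightarrow> real" where
  "h q u x = negaq q (THE \<alpha>. \<alpha> \<in> Seqs q u \<and> xval q u \<alpha> = x)"

end

theory Submission
  imports Defs
begin

text \<open>The values of all nega-\<open>q\<close>-ary digit sequences fill an interval of length 1, whose
  endpoints are attained only by sequences alternating between the digits \<open>0\<close> and \<open>q - 1\<close>.
  Comparing first differing digits, a sequence none of whose tails is extremal is therefore the
  only representation of its value, and every sequence with a nearby value shares a long prefix
  with it. Both \<open>\<alpha>\<close> and its block expansion are of this kind (for the blocks this needs
  \<open>q > 3\<close>), and the first \<open>\<alpha>\<^sub>1 + \<dots> + \<alpha>\<^sub>N\<close> block digits determine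
  \<open>\<alpha>\<^sub>1, \<dots>, \<alpha>\<^sub>N\<close>. This yields injectivity and uniqueness of representations, and
  continuity of \<open>h\<close>: nearby points of \<open>D(h)\<close> have long common prefixes of block digits,
  hence of the \<open>\<alpha>\<close>'s, hence nearby images.\<close>

definition digit_seq :: "nat \<Rightarrow> (nat \<Rightarrow> nat) \<Rightarrow> bool" where
  "digit_seq q s \<longleftrightarrow> (\<forall>j. s j < q)"

text \<open>The weight \<open>1 / (-q) ^ Suc j\<close> of digit \<open>j\<close> is negative exactly for even \<open>j\<close>,
  so these two sequences minimise resp. maximise every term of \<open>negaq q\<close>.\<close>
definition min_digits :: "nat \<Rightarrow> nat \<Rightarrow> nat" where
  "min_digits q j = (if even j then q - 1 else 0)"

definition max_digits :: "nat \<Rightarrow> nat \<Rightarrow> nat" where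
  "max_digits q j = (if odd j then q - 1 else 0)"

lemma digit_seq_shift: "digit_seq q s \<Longrightarrow> digit_seq q (\<lambda>i. s (i + N))"
  by (simp add: digit_seq_def)

lemma digit_seq_min_digits: "q > 0 \<Longrightarrow> digit_seq q (min_digits q)"
  and digit_seq_max_digits: "q > 0 \<Longrightarrow> digit_seq q (max_digits q)"
  by (auto simp: digit_seq_def min_digits_def max_digits_def)

lemma summable_negaq:
  assumes "digit_seq q s" "q > 1"
  shows "summable (\<lambda>k. real (s k) / (- real q) ^ Suc k)"
proof (rule summable_comparison_test'[OF summable_geometric[of "1 / real q"]])
  show "norm (1 / real q) < 1" using assms(2) by simp
  fix k
  have "real (s k) \<le> real q" using assms(1) by (simp add: digit_seq_def less_imp_le)
  then have "real (s k) / real q ^ Suc k \<le> real q / real q ^ Suc k"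
    by (intro divide_right_mono) auto
  also have "\<dots> = (1 / real q) ^ k" using assms(2) by (simp add: power_divide)
  finally show "norm (real (s k) / (- real q) ^ Suc k) \<le> (1 / real q) ^ k"
    by (simp add: abs_mult power_abs)
qed

lemma negaq_shift:
  assumes "digit_seq q s" "q > 1"
  shows "negaq q s = (\<Sum>i<N. real (s i) / (- real q) ^ Suc i)
           + negaq q (\<lambda>i. s (i + N)) / (- real q) ^ N"
proof -
  have "negaq q s = (\<Sum>i. real (s (i + N)) / (- real q) ^ Suc (i + N))
          + (\<Sum>i<N. real (s i) / (- real q) ^ Suc i)"
    unfolding negaq_def by (rule suminf_split_initial_segment[OF summable_negaq[OF assms]])
  also have "(\<Sum>i. real (s (i + N)) / (- real q) ^ Suc (i + N))
           = (\<Sum>i. real (s (i + N)) / (- real q) ^ Suc i / (- real q) ^ N)"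
    by (simp add: power_add mult.assoc)
  also have "\<dots> = negaq q (\<lambda>i. s (i + N)) / (- real q) ^ N"
    unfolding negaq_def
    by (rule suminf_divide[OF summable_negaq[OF digit_seq_shift[OF assms(1)] assms(2)]])
  finally show ?thesis by simp
qed

lemma negaq_first_digit:
  assumes "digit_seq q s" "q > 1"
  shows "negaq q s = (real (s 0) + negaq q (\<lambda>i. s (Suc i))) / - real q"
  using negaq_shift[OF assms, of 1] by (simp add: add_divide_distrib)

lemma negaq_common_prefix:
  assumes "digit_seq q a" "digit_seq q b" "q > 1" "\<forall>i<N. a i = b i"
  shows "negaq q a - negaq q b
           = (negaq q (\<lambda>i. a (i + N)) - negaq q (\<lambda>i. b (i + N))) / (- real q) ^ N"
  using negaq_shift[OF assms(1,3), of N] negaq_shift[OF assms(2,3), of N] assms(4)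
  by (simp add: diff_divide_distrib)

lemma suminf_strict_mono:
  fixes f g :: "nat \<Rightarrow> real"
  assumes "summable f" "summable g" "\<And>n. f n \<le> g n" "f i < g i"
  shows "suminf f < suminf g"
proof -
  have "0 < (\<Sum>n. g n - f n)"
    using assms by (subst suminf_pos_iff) (auto intro: summable_diff)
  then show ?thesis using suminf_diff[OF assms(2,1)] by simp
qed

lemma negaq_term_le_max:
  assumes "d < q"
  shows "real d / (- real q) ^ Suc j \<le> real (max_digits q j) / (- real q) ^ Suc j"
    and "d \<noteq> max_digits q j \<Longrightarrow>
      real d / (- real q) ^ Suc j < real (max_digits q j) / (- real q) ^ Suc j"
  using assms by (cases "even j"; force simp: max_digits_def power_minus'
      intro: divide_right_mono divide_strict_right_mono)+

lemma negaq_term_ge_min: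
  assumes "d < q"
  shows "real (min_digits q j) / (- real q) ^ Suc j \<le> real d / (- real q) ^ Suc j"
    and "d \<noteq> min_digits q j \<Longrightarrow>
      real (min_digits q j) / (- real q) ^ Suc j < real d / (- real q) ^ Suc j"
  using assms by (cases "even j"; force simp: min_digits_def power_minus'
      intro: divide_right_mono divide_strict_right_mono)+

lemma negaq_le_max:
  assumes "digit_seq q s" "q > 1"
  shows "negaq q s \<le> negaq q (max_digits q)"
  unfolding negaq_def
  by (rule suminf_le[OF negaq_term_le_max(1) summable_negaq[OF assms]
        summable_negaq[OF digit_seq_max_digits assms(2)]])
    (use assms in \<open>auto simp: digit_seq_def\<close>)

lemma negaq_less_max:
  assumes "digit_seq q s" "q > 1" "s i \<noteq> max_digits q i"
  shows "negaq q s < negaq q (max_digits q)"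
  unfolding negaq_def
  by (rule suminf_strict_mono[OF summable_negaq[OF assms(1,2)]
        summable_negaq[OF digit_seq_max_digits assms(2)] negaq_term_le_max(1) negaq_term_le_max(2)[OF _ assms(3)]])
    (use assms in \<open>auto simp: digit_seq_def\<close>)

lemma negaq_ge_min:
  assumes "digit_seq q s" "q > 1"
  shows "negaq q (min_digits q) \<le> negaq q s"
  unfolding negaq_def
  by (rule suminf_le[OF negaq_term_ge_min(1) summable_negaq[OF digit_seq_min_digits assms(2)]
        summable_negaq[OF assms]])
    (use assms in \<open>auto simp: digit_seq_def\<close>)

lemma negaq_greater_min:
  assumes "digit_seq q s" "q > 1" "s i \<noteq> min_digits q i"
  shows "negaq q (min_digits q) < negaq q s"
  unfolding negaq_def
  by (rule suminf_strict_mono[OF summable_negaq[OF digit_seq_min_digits assms(2)]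
        summable_negaq[OF assms(1,2)] negaq_term_ge_min(1) negaq_term_ge_min(2)[OF _ assms(3)]])
    (use assms in \<open>auto simp: digit_seq_def\<close>)

lemma negaq_max_minus_min:
  assumes "q > 1"
  shows "negaq q (max_digits q) - negaq q (min_digits q) = 1"
proof -
  have "negaq q (max_digits q) - negaq q (min_digits q)
      = (\<Sum>k. real (max_digits q k) / (- real q) ^ Suc k - real (min_digits q k) / (- real q) ^ Suc k)"
    unfolding negaq_def using assms
    by (intro suminf_diff summable_negaq digit_seq_max_digits digit_seq_min_digits) auto
  also have "\<dots> = (\<Sum>k. (real q - 1) / real q * (1 / real q) ^ k)"
    using assms by (intro suminf_cong)
      (auto simp: max_digits_def min_digits_def of_nat_diff power_minus' power_divide field_simps)
  also have "\<dots> = 1"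
    using assms by (subst suminf_mult) (auto simp: suminf_geometric field_simps)
  finally show ?thesis .
qed

text \<open>No tail alternates between \<open>0\<close> and \<open>q - 1\<close>, i.e. no tail is that of
  \<open>min_digits q\<close> or \<open>max_digits q\<close>.\<close>
definition nonalternating :: "nat \<Rightarrow> (nat \<Rightarrow> nat) \<Rightarrow> bool" where
  "nonalternating q s \<longleftrightarrow> (\<exists>\<^sub>F j in sequentially. s j = s (Suc j) \<or> s j \<notin> {0, q - 1})"

lemma nonalternating_shift:
  "nonalternating q s \<Longrightarrow> nonalternating q (\<lambda>i. s (i + N))"
  unfolding nonalternating_def frequently_def
  using eventually_sequentially_seg[where k=N
      and P="\<lambda>j. \<not> (s j = s (Suc j) \<or> s j \<notin> {0, q - 1})"]
  by simp

lemma nonalternating_strictly_inside: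
  assumes "digit_seq q s" "q > 1" "nonalternating q s"
  shows "negaq q (min_digits q) < negaq q s" "negaq q s < negaq q (max_digits q)"
proof -
  obtain j where j: "s j = s (Suc j) \<or> s j \<notin> {0, q - 1}"
    using assms(3) frequently_ex unfolding nonalternating_def by blast
  have "\<exists>i. s i \<noteq> t i" if "t j \<in> {0, q - 1}" "t j \<noteq> t (Suc j)" for t :: "nat \<Rightarrow> nat"
    using j that by (cases "s j = t j"; cases "s (Suc j) = t (Suc j)") auto
  moreover have "min_digits q j \<in> {0, q - 1}" "min_digits q j \<noteq> min_digits q (Suc j)"
    "max_digits q j \<in> {0, q - 1}" "max_digits q j \<noteq> max_digits q (Suc j)"
    using assms(2) by (auto simp: min_digits_def max_digits_def)
  ultimately show "negaq q (min_digits q) < negaq q s" "negaq q s < negaq q (max_digits q)"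
    using negaq_greater_min[OF assms(1,2)] negaq_less_max[OF assms(1,2)] by blast+
qed

definition boundary_dist :: "nat \<Rightarrow> (nat \<Rightarrow> nat) \<Rightarrow> real" where
  "boundary_dist q s =
     min (negaq q s - negaq q (min_digits q)) (negaq q (max_digits q) - negaq q s)"

lemma boundary_dist_pos:
  "digit_seq q s \<Longrightarrow> q > 1 \<Longrightarrow> nonalternating q s \<Longrightarrow> boundary_dist q s > 0"
  using nonalternating_strictly_inside unfolding boundary_dist_def by fastforce

lemma boundary_dist_le_negaq_diff:
  assumes a: "digit_seq q a" and b: "digit_seq q b" and q: "q > 1" and "a 0 \<noteq> b 0"
  shows "boundary_dist q (\<lambda>i. a (Suc i)) / real q \<le> \<bar>negaq q a - negaq q b\<bar>"
proof -
  define A where "A = negaq q (\<lambda>i. a (Suc i))"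
  define B where "B = negaq q (\<lambda>i. b (Suc i))"
  define d where "d = real (a 0) - real (b 0)"
  have "negaq q a - negaq q b = (d + A - B) / - real q"
    using negaq_first_digit[OF a q] negaq_first_digit[OF b q]
    unfolding A_def B_def d_def by (simp add: diff_divide_distrib add_divide_distrib)
  then have diff: "\<bar>negaq q a - negaq q b\<bar> = \<bar>d + A - B\<bar> / real q"
    by simp
  have tail_b: "digit_seq q (\<lambda>i. b (Suc i))" using b by (simp add: digit_seq_def)
  have "negaq q (min_digits q) \<le> B" "B \<le> negaq q (min_digits q) + 1"
    using negaq_ge_min[OF tail_b q] negaq_le_max[OF tail_b q] negaq_max_minus_min[OF q]
    unfolding B_def by auto
  moreover have "d \<ge> 1 \<or> d \<le> -1" unfolding d_def using assms(4) by linarith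
  \<comment> \<open>with \<open>B\<close> in an interval of length 1, \<open>d + A - B\<close> is then at least as far from 0
      as \<open>A\<close> is from the ends of that interval\<close>
  ultimately have "boundary_dist q (\<lambda>i. a (Suc i)) \<le> \<bar>d + A - B\<bar>"
    using negaq_max_minus_min[OF q] unfolding boundary_dist_def A_def[symmetric]
    by (auto simp: min_def abs_if)
  then show ?thesis unfolding diff using q by (simp add: divide_right_mono)
qed

lemma negaq_diff_le_of_common_prefix:
  assumes a: "digit_seq q a" and b: "digit_seq q b" and q: "q > 1" and "\<forall>i<N. a i = b i"
  shows "\<bar>negaq q a - negaq q b\<bar> \<le> 1 / real q ^ N"
proof -
  define A where "A = negaq q (\<lambda>i. a (i + N))"
  define B where "B = negaq q (\<lambda>i. b (i + N))"
  have "\<bar>negaq q a - negaq q b\<bar> = \<bar>A - B\<bar> / real q ^ N"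
    using negaq_common_prefix[OF assms] unfolding A_def B_def by (simp add: power_abs)
  moreover have "\<bar>A - B\<bar> \<le> 1"
    using negaq_ge_min[OF digit_seq_shift[OF a, of N] q]
      negaq_le_max[OF digit_seq_shift[OF a, of N] q]
      negaq_ge_min[OF digit_seq_shift[OF b, of N] q]
      negaq_le_max[OF digit_seq_shift[OF b, of N] q]
      negaq_max_minus_min[OF q]
    unfolding A_def B_def by linarith
  ultimately show ?thesis using q by (simp add: divide_right_mono)
qed

lemma nonalternating_prefix_stable:
  assumes a: "digit_seq q a" and q: "q > 1" and na: "nonalternating q a"
  shows "\<exists>\<delta>>0. \<forall>b. digit_seq q b \<and> \<bar>negaq q b - negaq q a\<bar> < \<delta> \<longrightarrow> (\<forall>i<M. b i = a i)"
proof (induction M)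
  case 0
  show ?case by (intro exI[of _ 1]) auto
next
  case (Suc M)
  then obtain \<delta> where \<delta>: "\<delta> > 0"
    and prefix: "\<forall>b. digit_seq q b \<and> \<bar>negaq q b - negaq q a\<bar> < \<delta> \<longrightarrow> (\<forall>i<M. b i = a i)"
    by blast
  define g where "g = boundary_dist q (\<lambda>i. a (i + Suc M)) / real q ^ Suc M"
  have "g > 0"
    unfolding g_def using q
    by (intro divide_pos_pos boundary_dist_pos digit_seq_shift a nonalternating_shift na) auto
  moreover have "\<forall>i<Suc M. b i = a i"
    if b: "digit_seq q b" and close: "\<bar>negaq q b - negaq q a\<bar> < min \<delta> g" for b
  proof -
    have same: "\<forall>i<M. a i = b i" using prefix b close by auto
    have "a M = b M"
    proof (rule ccontr)
      assume "a M \<noteq> b M"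
      then have tail: "boundary_dist q (\<lambda>i. a (Suc i + M)) / real q
                   \<le> \<bar>negaq q (\<lambda>i. a (i + M)) - negaq q (\<lambda>i. b (i + M))\<bar>"
        by (intro boundary_dist_le_negaq_diff digit_seq_shift a b q) simp
      have "g \<le> \<bar>negaq q (\<lambda>i. a (i + M)) - negaq q (\<lambda>i. b (i + M))\<bar> / real q ^ M"
        using divide_right_mono[OF tail, of "real q ^ M"] unfolding g_def by simp
      also have "\<dots> = \<bar>negaq q a - negaq q b\<bar>"
        using negaq_common_prefix[OF a b q same] by (simp add: power_abs)
      finally have "g \<le> \<bar>negaq q a - negaq q b\<bar>" .
      then show False using close by (simp add: abs_minus_commute)
    qed
    then show ?thesis using same by (auto simp: less_Suc_eq)
  qed
  ultimately show ?case using \<delta> by (intro exI[of _ "min \<delta> g"]) auto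
qed

lemma negaq_unique_nonalternating:
  assumes "digit_seq q a" "q > 1" "nonalternating q a" "digit_seq q b" "negaq q b = negaq q a"
  shows "b = a"
proof
  fix i
  obtain \<delta> where "\<delta> > 0"
    "\<forall>b. digit_seq q b \<and> \<bar>negaq q b - negaq q a\<bar> < \<delta> \<longrightarrow> (\<forall>j<Suc i. b j = a j)"
    using nonalternating_prefix_stable[OF assms(1-3)] by blast
  then show "b i = a i" using assms(4,5) by auto
qed

lemma psum_Suc: "psum \<alpha> (Suc n) = psum \<alpha> n + \<alpha> n"
  by (simp add: psum_def)

lemma psum_cong: "\<forall>i<n. \<alpha> i = \<beta> i \<Longrightarrow> psum \<alpha> n = psum \<beta> n"
  by (simp add: psum_def)

lemma strict_mono_psum: "(\<And>i. \<alpha> i > 0) \<Longrightarrow> strict_mono (psum \<alpha>)"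
  by (simp add: strict_mono_Suc_iff psum_Suc)

lemma blockdigits_in_block:
  assumes pos: "\<And>i. \<alpha> i > 0" and k: "psum \<alpha> n \<le> k" "k < psum \<alpha> (Suc n)"
  shows "blockdigits u \<alpha> k = (if Suc k = psum \<alpha> (Suc n) then \<alpha> n else u)"
proof -
  have hit: "psum \<alpha> (Suc m) = Suc k \<longleftrightarrow> m = n \<and> Suc k = psum \<alpha> (Suc n)" for m
  proof
    assume m: "psum \<alpha> (Suc m) = Suc k"
    then have "psum \<alpha> n < psum \<alpha> (Suc m)" "psum \<alpha> (Suc m) \<le> psum \<alpha> (Suc n)" using k by auto
    then have "n < Suc m" "Suc m \<le> Suc n"
      using strict_mono_less[OF strict_mono_psum] strict_mono_less_eq[OF strict_mono_psum] pos
      by blast+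
    then show "m = n \<and> Suc k = psum \<alpha> (Suc n)" using m by (simp add: less_Suc_eq_le)
  qed simp
  show ?thesis unfolding blockdigits_def hit by (simp add: Least_equality)
qed

lemma blockdigits_block_end:
  assumes pos: "\<And>i. \<alpha> i > 0"
  shows "blockdigits u \<alpha> (psum \<alpha> n + \<alpha> n - 1) = \<alpha> n"
  using blockdigits_in_block[of \<alpha> n "psum \<alpha> n + \<alpha> n - 1" u, OF pos] pos[of n]
  by (simp add: psum_Suc)

lemma blockdigits_block_inner:
  "(\<And>i. \<alpha> i > 0) \<Longrightarrow> j + 1 < \<alpha> n \<Longrightarrow> blockdigits u \<alpha> (psum \<alpha> n + j) = u"
  using blockdigits_in_block[of \<alpha> n "psum \<alpha> n + j"] by (simp add: psum_Suc)

lemma Seqs_iff: "\<alpha> \<in> Seqs q u \<longleftrightarrow> (\<forall>n. 0 < \<alpha> n \<and> \<alpha> n < q \<and> \<alpha> n \<noteq> u)"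
proof -
  have "a \<in> Theta q u \<longleftrightarrow> 0 < a \<and> a < q \<and> a \<noteq> u" for a
    by (auto simp: Theta_def)
  then show ?thesis by (simp add: Seqs_def)
qed

lemma blockdigits_block_eq:
  assumes \<alpha>: "\<alpha> \<in> Seqs q u" and \<beta>: "\<beta> \<in> Seqs q u" and start: "psum \<alpha> n = psum \<beta> n"
    and agree: "\<forall>k<psum \<alpha> (Suc n). blockdigits u \<alpha> k = blockdigits u \<beta> k"
  shows "\<alpha> n = \<beta> n"
proof (rule ccontr)
  have pos: "\<And>i. \<alpha> i > 0" "\<And>i. \<beta> i > 0" and not_u: "\<alpha> n \<noteq> u" "\<beta> n \<noteq> u"
    using \<alpha> \<beta> by (auto simp: Seqs_iff)
  assume "\<alpha> n \<noteq> \<beta> n"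
  then consider "\<alpha> n < \<beta> n" | "\<beta> n < \<alpha> n" by linarith
  then show False
  proof cases
    case 1
    then have "blockdigits u \<beta> (psum \<alpha> n + \<alpha> n - 1) = u"
      using blockdigits_block_inner[of \<beta> "\<alpha> n - 1" n u, OF pos(2)] pos(1)[of n] start by simp
    moreover have "blockdigits u \<alpha> (psum \<alpha> n + \<alpha> n - 1) = \<alpha> n"
      by (rule blockdigits_block_end[OF pos(1)])
    ultimately show False using agree not_u pos(1)[of n] by (auto simp: psum_Suc)
  next
    case 2
    then have "blockdigits u \<alpha> (psum \<alpha> n + \<beta> n - 1) = u"
      using blockdigits_block_inner[of \<alpha> "\<beta> n - 1" n u, OF pos(1)] pos(2)[of n] by simp
    moreover have "blockdigits u \<beta> (psum \<alpha> n + \<beta> n - 1) = \<beta> n"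
      using blockdigits_block_end[OF pos(2)] start by simp
    ultimately show False using agree not_u pos(2)[of n] 2 by (auto simp: psum_Suc)
  qed
qed

lemma blockdigits_prefix_determines:
  assumes \<alpha>: "\<alpha> \<in> Seqs q u" and \<beta>: "\<beta> \<in> Seqs q u"
    and agree: "\<forall>k<psum \<alpha> N. blockdigits u \<alpha> k = blockdigits u \<beta> k"
  shows "\<forall>i<N. \<alpha> i = \<beta> i"
  using agree
proof (induction N)
  case (Suc N)
  have "psum \<alpha> N \<le> psum \<alpha> (Suc N)" by (simp add: psum_Suc)
  then have "\<forall>i<N. \<alpha> i = \<beta> i" using Suc by auto
  moreover have "\<alpha> N = \<beta> N"
    using blockdigits_block_eq[OF \<alpha> \<beta> psum_cong] Suc.prems calculation by blast
  ultimately show ?case by (auto simp: less_Suc_eq)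
qed simp

lemma digit_seq_Seqs: "\<alpha> \<in> Seqs q u \<Longrightarrow> digit_seq q \<alpha>"
  by (simp add: Seqs_iff digit_seq_def)

lemma digit_seq_blockdigits: "\<alpha> \<in> Seqs q u \<Longrightarrow> u < q \<Longrightarrow> digit_seq q (blockdigits u \<alpha>)"
  by (simp add: Seqs_iff digit_seq_def blockdigits_def)

lemma nonalternating_Seqs:
  assumes "\<alpha> \<in> Seqs q u"
  shows "nonalternating q \<alpha>"
  unfolding nonalternating_def frequently_sequentially
proof
  fix m
  have "0 < \<alpha> i" "\<alpha> i < q" for i using assms by (auto simp: Seqs_iff)
  then have "\<alpha> m \<notin> {0, q - 1} \<or> \<alpha> (Suc m) \<notin> {0, q - 1} \<or> \<alpha> m = \<alpha> (Suc m)"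
    by auto
  then show "\<exists>j\<ge>m. \<alpha> j = \<alpha> (Suc j) \<or> \<alpha> j \<notin> {0, q - 1}"
    by (metis le_Suc_eq order.refl)
qed

text \<open>Here \<open>q > 3\<close> is needed: a block of digit \<open>q - 1 \<ge> 3\<close> starts with two equal digits \<open>u\<close>.\<close>
lemma nonalternating_blockdigits:
  assumes \<alpha>: "\<alpha> \<in> Seqs q u" and q: "q > 3"
  shows "nonalternating q (blockdigits u \<alpha>)"
  unfolding nonalternating_def frequently_sequentially
proof
  fix m
  have pos: "\<And>i. \<alpha> i > 0" and lt: "\<alpha> m < q" using \<alpha> by (auto simp: Seqs_iff)
  have m: "m \<le> psum \<alpha> m" by (rule seq_suble[OF strict_mono_psum[OF pos]])
  show "\<exists>j\<ge>m. blockdigits u \<alpha> j = blockdigits u \<alpha> (Suc j) \<or> blockdigits u \<alpha> j \<notin> {0, q - 1}"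
  proof (cases "\<alpha> m = q - 1")
    case True
    then have "blockdigits u \<alpha> (psum \<alpha> m + j) = u" if "j \<le> 1" for j
      using blockdigits_block_inner[OF pos] q that by auto
    from this[of 0] this[of 1] show ?thesis using m by (intro exI[of _ "psum \<alpha> m"]) simp
  next
    case False
    then show ?thesis
      using blockdigits_block_end[of \<alpha> u m, OF pos] pos[of m] lt m
      by (intro exI[of _ "psum \<alpha> m + \<alpha> m - 1"]) auto
  qed
qed

lemma blockdigits_unique_representation:
  assumes q: "q > 3" "u < q" and \<alpha>: "\<alpha> \<in> Seqs q u"
    and \<beta>: "digit_seq q \<beta>" "negaq q \<beta> = xval q u \<alpha>"
  shows "\<beta> = blockdigits u \<alpha>"
  by (rule negaq_unique_nonalternating[OF digit_seq_blockdigits[OF \<alpha> q(2)] _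
        nonalternating_blockdigits[OF \<alpha> q(1)]])
    (use q \<beta> in \<open>auto simp: xval_def\<close>)

lemma inj_on_xval:
  assumes q: "q > 3" "u < q"
  shows "inj_on (xval q u) (Seqs q u)"
proof
  fix \<alpha> \<beta> assume \<alpha>: "\<alpha> \<in> Seqs q u" and \<beta>: "\<beta> \<in> Seqs q u"
    and eq: "xval q u \<alpha> = xval q u \<beta>"
  have same: "blockdigits u \<beta> = blockdigits u \<alpha>"
    using eq by (intro blockdigits_unique_representation[OF q \<alpha>] digit_seq_blockdigits[OF \<beta>] q)
      (simp add: xval_def)
  show "\<alpha> = \<beta>"
  proof
    fix i
    show "\<alpha> i = \<beta> i" using blockdigits_prefix_determines[OF \<alpha> \<beta>, of "Suc i"] same by simp
  qed
qed

lemma h_xval: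
  assumes q: "q > 3" "u < q" and \<alpha>: "\<alpha> \<in> Seqs q u"
  shows "h q u (xval q u \<alpha>) = negaq q \<alpha>"
proof -
  have "(THE \<beta>. \<beta> \<in> Seqs q u \<and> xval q u \<beta> = xval q u \<alpha>) = \<alpha>"
    using \<alpha> inj_on_xval[OF q] by (auto dest: inj_onD)
  then show ?thesis unfolding h_def by simp
qed

lemma inj_on_negaq_Seqs: "q > 1 \<Longrightarrow> inj_on (negaq q) (Seqs q u)"
  by (intro inj_onI negaq_unique_nonalternating digit_seq_Seqs nonalternating_Seqs) auto

lemma bij_betw_h:
  assumes q: "q > 3" "u < q"
  shows "bij_betw (h q u) (Dh q u) (Eh q u)"
  unfolding bij_betw_def
proof
  show "inj_on (h q u) (Dh q u)"
  proof
    fix x y assume "x \<in> Dh q u" "y \<in> Dh q u" and eq: "h q u x = h q u y"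
    then obtain \<alpha> \<beta> where \<alpha>: "\<alpha> \<in> Seqs q u" "x = xval q u \<alpha>"
      and \<beta>: "\<beta> \<in> Seqs q u" "y = xval q u \<beta>"
      unfolding Dh_def by blast
    have "negaq q \<alpha> = negaq q \<beta>" using eq h_xval[OF q] \<alpha> \<beta> by simp
    then have "\<alpha> = \<beta>" using inj_on_negaq_Seqs[of q u] \<alpha>(1) \<beta>(1) q by (simp add: inj_on_eq_iff)
    then show "x = y" using \<alpha> \<beta> by simp
  qed
  show "h q u ` Dh q u = Eh q u"
    unfolding Dh_def Eh_def image_image using h_xval[OF q] by (intro image_cong) auto
qed

lemma continuous_h:
  assumes q: "q > 3" "u < q" and x: "x \<in> Dh q u"
  shows "continuous (at x within Dh q u) (h q u)"
  unfolding continuous_within_eps_delta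
proof (intro allI impI)
  fix \<epsilon> :: real assume "\<epsilon> > 0"
  obtain \<alpha> where \<alpha>: "\<alpha> \<in> Seqs q u" and x_eq: "x = xval q u \<alpha>"
    using x unfolding Dh_def by blast
  obtain N where N: "(1 / real q) ^ N < \<epsilon>"
    using real_arch_pow_inv[OF \<open>\<epsilon> > 0\<close>, of "1 / real q"] q by auto
  obtain \<delta> where "\<delta> > 0" and \<delta>: "\<forall>b. digit_seq q b \<and> \<bar>negaq q b - xval q u \<alpha>\<bar> < \<delta>
      \<longrightarrow> (\<forall>k<psum \<alpha> N. b k = blockdigits u \<alpha> k)"
    using nonalternating_prefix_stable[OF digit_seq_blockdigits[OF \<alpha> q(2)] _
        nonalternating_blockdigits[OF \<alpha> q(1)], of "psum \<alpha> N"] q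
    unfolding xval_def by auto
  have "dist (h q u y) (h q u x) < \<epsilon>" if "y \<in> Dh q u" "dist y x < \<delta>" for y
  proof -
    obtain \<beta> where \<beta>: "\<beta> \<in> Seqs q u" and y_eq: "y = xval q u \<beta>"
      using \<open>y \<in> Dh q u\<close> unfolding Dh_def by blast
    have "\<forall>k<psum \<alpha> N. blockdigits u \<alpha> k = blockdigits u \<beta> k"
      using \<delta> digit_seq_blockdigits[OF \<beta> q(2)] \<open>dist y x < \<delta>\<close>
      unfolding x_eq y_eq xval_def dist_real_def by auto
    then have "\<forall>i<N. \<beta> i = \<alpha> i" using blockdigits_prefix_determines[OF \<alpha> \<beta>] by auto
    then have "\<bar>negaq q \<beta> - negaq q \<alpha>\<bar> \<le> 1 / real q ^ N"
      using q by (intro negaq_diff_le_of_common_prefix digit_seq_Seqs[OF \<alpha>] digit_seq_Seqs[OF \<beta>]) auto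
    then show ?thesis
      using N h_xval[OF q \<alpha>] h_xval[OF q \<beta>] unfolding x_eq y_eq dist_real_def
      by (simp add: power_divide)
  qed
  then show "\<exists>\<delta>>0. \<forall>y\<in>Dh q u. dist y x < \<delta> \<longrightarrow> dist (h q u y) (h q u x) < \<epsilon>"
    using \<open>\<delta> > 0\<close> by blast
qed

theorem theorem3p1:
  fixes q u :: nat
  assumes "q > 3" and "u < q"
  shows "inj_on (xval q u) (Seqs q u)
    \<and> (\<forall>\<alpha>\<in>Seqs q u. \<forall>\<beta>. (\<forall>k. \<beta> k < q) \<and> negaq q \<beta> = xval q u \<alpha>
           \<longrightarrow> \<beta> = blockdigits u \<alpha>)
    \<and> bij_betw (h q u) (Dh q u) (Eh q u)
    \<and> (\<forall>x\<in>Dh q u. continuous (at x within Dh q u) (h q u))"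
  using inj_on_xval[OF assms] blockdigits_unique_representation[OF assms]
    bij_betw_h[OF assms] continuous_h[OF assms]
  by (auto simp: digit_seq_def)

end
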